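(* Let $c_1,c_2\in\overline{C}_Q$ and $(z,\tau)\in D(c_1)\cap D(c_2)$. Then the series $$\theta^{c_1,c_2}(z;\tau)=\sum_{n\in\mathbb{Z}^r}\rho(n+a;\tau)e^{2\pi iQ(n)\tau+2\pi iB(n,z)},\qquad a=\operatorname{Im}(z)/\operatorname{Im}(\tau),$$ converges absolutely.
   Context: $A$ is a nondegenerate symmetric $r\times r$ matrix with integer entries, $Q(x)=\frac12\langle x,Ax\rangle$, $B(x,y)=\langle x,Ay\rangle$ (extended bilinearly to $\mathbb{C}^r$). $Q$ has type $(r-1,1)$: the largest dimension of a subspace of $\mathbb{R}^r$ on which $Q$ is negative definite is $1$. Fix $c_0\in\mathbb{R}^r$ with $Q(c_0)<0$ and put $C_Q=\{c\in\mathbb{R}^r:Q(c)<0,\ B(c,c_0)<0\}$, $S_Q=\{c\in\mathbb{Z}^r\text{ primitive}:Q(c)=0,\ B(c,c_0)<0\}$, $\overline{C}_Q=C_Q\cup S_Q$. For $c\in\overline C_Q$: $R(c)=\mathbb{R}^r$ if $c\in C_Q$ and $R(c)=\{a\in\mathbb{R}^r:B(c,a)\notin\mathbb{Z}\}$ if $c\in S_Q$; $D(c)=\{(z,\tau)\in\mathbb{C}^r\times\mathbb{H}:\operatorname{Im}(z)/\operatorname{Im}(\tau)\in R(c)\}$. With $y=\operatorname{Im}\tau$ and $E(z)=2\int_0^ze^{-\pi t^2}dt$, let $\rho^c(\nu;\tau)=E\big(\frac{B(c,\nu)}{\sqrt{-Q(c)}}y^{1/2}\big)$ if $c\in C_Q$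 and $\rho^c(\nu;\tau)=\operatorname{sign}(B(c,\nu))$ if $c\in S_Q$ (with $\operatorname{sign}(0)=0$), and $\rho=\rho^{c_1}-\rho^{c_2}$. *)

theory Defs
  imports "HOL-Analysis.Analysis"
begin

definition realmat :: "int^'n^'n \<Rightarrow> real^'n^'n" where
  "realmat A = (\<chi> i j. real_of_int (A$i$j))"

definition Bf :: "int^'n^'n \<Rightarrow> real^'n \<Rightarrow> real^'n \<Rightarrow> real" where
  "Bf A x y = x \<bullet> (realmat A *v y)"

definition Qf :: "int^'n^'n \<Rightarrow> real^'n \<Rightarrow> real" where
  "Qf A x = Bf A x x / 2"

text \<open>Bilinear (not sesquilinear) extension of B to complex vectors.\<close>
definition Bc :: "int^'n^'n \<Rightarrow> complex^'n \<Rightarrow> complex^'n \<Rightarrow> complex" where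
  "Bc A x y = (\<Sum>i\<in>UNIV. \<Sum>j\<in>UNIV. x$i * of_int (A$i$j) * y$j)"

definition neg_def_on :: "int^'n^'n \<Rightarrow> (real^'n) set \<Rightarrow> bool" where
  "neg_def_on A V \<longleftrightarrow> (\<forall>x\<in>V. x \<noteq> 0 \<longrightarrow> Qf A x < 0)"

text \<open>Q has type (r-1,1): the largest dimension of a subspace on which Q is
  negative definite is 1.\<close>
definition type_r1_1 :: "int^'n^'n \<Rightarrow> bool" where
  "type_r1_1 A \<longleftrightarrow>
     (\<exists>V. subspace V \<and> dim V = 1 \<and> neg_def_on A V) \<and>
     (\<forall>V. subspace V \<and> neg_def_on A V \<longrightarrow> dim V \<le> 1)"

definition int_vec :: "int^'n \<Rightarrow> real^'n" where
  "int_vec m = (\<chi> i. real_of_int (m$i))"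

definition primitive_int :: "real^'n \<Rightarrow> bool" where
  "primitive_int c \<longleftrightarrow> (\<exists>m::int^'n. c = int_vec m \<and>
       (\<forall>d::int. (\<forall>i. d dvd m$i) \<longrightarrow> is_unit d))"

definition CQ :: "int^'n^'n \<Rightarrow> real^'n \<Rightarrow> (real^'n) set" where
  "CQ A c0 = {c. Qf A c < 0 \<and> Bf A c c0 < 0}"

definition SQ :: "int^'n^'n \<Rightarrow> real^'n \<Rightarrow> (real^'n) set" where
  "SQ A c0 = {c. primitive_int c \<and> Qf A c = 0 \<and> Bf A c c0 < 0}"

definition CQbar :: "int^'n^'n \<Rightarrow> real^'n \<Rightarrow> (real^'n) set" where
  "CQbar A c0 = CQ A c0 \<union> SQ A c0"

definition Rset :: "int^'n^'n \<Rightarrow> real^'n \<Rightarrow> real^'n \<Rightarrow> (real^'n) set" where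
  "Rset A c0 c = (if c \<in> CQ A c0 then UNIV else {a. Bf A c a \<notin> \<int>})"

definition imquot :: "complex^'n \<Rightarrow> complex \<Rightarrow> real^'n" where
  "imquot z \<tau> = (\<chi> i. Im (z$i) / Im \<tau>)"

definition Dset :: "int^'n^'n \<Rightarrow> real^'n \<Rightarrow> real^'n \<Rightarrow> ((complex^'n) \<times> complex) set" where
  "Dset A c0 c = {(z,\<tau>). Im \<tau> > 0 \<and> imquot z \<tau> \<in> Rset A c0 c}"

definition Ef :: "real \<Rightarrow> real" where
  "Ef u = 2 * (if 0 \<le> u then integral {0..u} (\<lambda>t. exp (-pi * t^2))
               else - integral {u..0} (\<lambda>t. exp (-pi * t^2)))"

definition rho_c :: "int^'n^'n \<Rightarrow> real^'n \<Rightarrow> real^'n \<Rightarrow> real^'n \<Rightarrow> complex \<Rightarrow> real" where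
  "rho_c A c0 c \<nu> \<tau> =
     (if c \<in> CQ A c0 then Ef (Bf A c \<nu> / sqrt (- Qf A c) * sqrt (Im \<tau>))
      else sgn (Bf A c \<nu>))"

definition rho :: "int^'n^'n \<Rightarrow> real^'n \<Rightarrow> real^'n \<Rightarrow> real^'n \<Rightarrow> real^'n \<Rightarrow> complex \<Rightarrow> real" where
  "rho A c0 c1 c2 \<nu> \<tau> = rho_c A c0 c1 \<nu> \<tau> - rho_c A c0 c2 \<nu> \<tau>"

definition theta_term :: "int^'n^'n \<Rightarrow> real^'n \<Rightarrow> real^'n \<Rightarrow> real^'n \<Rightarrow> complex^'n \<Rightarrow> complex \<Rightarrow> int^'n \<Rightarrow> complex" where
  "theta_term A c0 c1 c2 z \<tau> n =
     of_real (rho A c0 c1 c2 (int_vec n + imquot z \<tau>) \<tau>) *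
     exp (2 * pi * \<i> * of_real (Qf A (int_vec n)) * \<tau>
          + 2 * pi * \<i> * Bc A (\<chi> i. of_int (n$i)) z)"

end

theory Submission
  imports Defs "HOL-Probability.Distributions"
begin

text \<open>Write
  $\rho = (\rho^{c_1} - \operatorname{sgn} B(c_1,\cdot)) - (\rho^{c_2} - \operatorname{sgn} B(c_2,\cdot))
   + (\operatorname{sgn} B(c_1,\cdot) - \operatorname{sgn} B(c_2,\cdot))$
  and bound each piece, multiplied by $|e^{2\pi i Q(n)\tau + 2\pi i B(n,z)}| = e^{-2\pi y Q(\nu)} e^{2\pi y Q(a)}$
  with $\nu = n + a$, by $K e^{-l\|\nu\|}$, which is summable over the shifted lattice.
  For $c \in C_Q$ the first two pieces are Gaussians in $B(c,\nu)$, and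
  $B(c,\nu)^2/(-2Q(c)) + Q(\nu)$ is a positive definite form in $\nu$ because $Q$ has type $(r-1,1)$.
  The last piece is supported where $B(c_1,\nu)B(c_2,\nu) \le 0$; splitting $\nu$ along
  $\operatorname{span}\{c_1, c_2\}$ and its $B$-orthogonal complement shows that $Q$ grows at least
  linearly there, the cusp case $c_i \in S_Q$ using that $B(c_i,\nu)$ stays away from $0$
  because $B(c_i, a) \notin \mathbb{Z}$.\<close>

lemma Bf_expand: "Bf A x y = (\<Sum>i\<in>UNIV. \<Sum>j\<in>UNIV. x$i * real_of_int (A$i$j) * y$j)"
  by (simp add: Bf_def inner_vec_def matrix_vector_mult_def realmat_def sum_distrib_left mult.assoc)

lemma Bf_add_left: "Bf A (x + y) z = Bf A x z + Bf A y z"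
  by (simp add: Bf_def inner_add_left)

lemma Bf_add_right: "Bf A x (y + z) = Bf A x y + Bf A x z"
  by (simp add: Bf_def matrix_vector_right_distrib inner_add_right)

lemma Bf_diff_right: "Bf A x (y - z) = Bf A x y - Bf A x z"
  by (simp add: Bf_def matrix_vector_mult_diff_distrib inner_diff_right)

lemma Bf_scaleR_left: "Bf A (c *\<^sub>R x) z = c * Bf A x z"
  by (simp add: Bf_def)

lemma Bf_scaleR_right: "Bf A x (c *\<^sub>R z) = c * Bf A x z"
  by (simp add: Bf_def matrix_vector_mult_scaleR)

lemma Bf_zero_right [simp]: "Bf A x 0 = 0"
  by (simp add: Bf_def)

lemma Qf_zero [simp]: "Qf A 0 = 0"
  by (simp add: Qf_def Bf_def)

lemma Bf_self: "Bf A x x = 2 * Qf A x"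
  by (simp add: Qf_def)

lemma Bf_commute:
  assumes "transpose A = A"
  shows "Bf A x y = Bf A y x"
proof -
  have "transpose (realmat A) = realmat A"
    using arg_cong[OF assms, of "\<lambda>M. M$_$_"]
    by (simp add: transpose_def realmat_def vec_eq_iff)
  moreover have "Bf A x y = (transpose (realmat A) *v x) \<bullet> y"
    by (simp add: Bf_def dot_lmul_matrix)
  ultimately show ?thesis
    by (simp add: Bf_def inner_commute)
qed

lemma Qf_scaleR: "Qf A (s *\<^sub>R u) = s\<^sup>2 * Qf A u"
  by (simp add: Qf_def Bf_scaleR_left Bf_scaleR_right power2_eq_square)

lemma Qf_lincomb:
  assumes "transpose A = A"
  shows "Qf A (s *\<^sub>R u + t *\<^sub>R v) = s\<^sup>2 * Qf A u + s * t * Bf A u v + t\<^sup>2 * Qf A v"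
  using Bf_commute[OF assms, of v u]
  by (simp add: Qf_def Bf_add_left Bf_add_right Bf_scaleR_left Bf_scaleR_right
      power2_eq_square algebra_simps)

lemma Qf_add:
  assumes "transpose A = A"
  shows "Qf A (u + v) = Qf A u + Bf A u v + Qf A v"
  using Qf_lincomb[OF assms, of 1 u 1 v] by simp

lemma continuous_on_Bf: "continuous_on S (Bf A x)"
  unfolding Bf_expand by (intro continuous_intros)

lemma continuous_on_Qf: "continuous_on S (Qf A)"
  unfolding Qf_def Bf_expand by (intro continuous_intros) auto

lemma Bf_nondegenerate:
  assumes "det A \<noteq> 0" and "\<And>x. Bf A w x = 0"
  shows "w = 0"
proof -
  have "det (realmat A) \<noteq> 0"
    using assms(1) by (simp add: det_def realmat_def flip: of_int_sum of_int_mult of_int_prod)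
  then obtain M where "realmat A ** M = mat 1"
    by (auto simp: invertible_det_nz[symmetric] invertible_def)
  then have "Bf A w (M *v w) = w \<bullet> w"
    by (simp add: Bf_def matrix_vector_mul_assoc)
  with assms(2) show ?thesis
    by simp
qed

lemma Bf_int_vec_Ints: "Bf A (int_vec m) (int_vec n) \<in> \<int>"
  unfolding Bf_expand int_vec_def by (intro Ints_sum Ints_mult) auto

section \<open>Cauchy--Schwarz for a form of type $(r-1,1)$\<close>

lemma span_pair_obtain:
  assumes "x \<in> span {u, v}"
  obtains s t where "x = s *\<^sub>R u + t *\<^sub>R v"
proof -
  from assms obtain s where "x - s *\<^sub>R u \<in> span {v}"
    by (auto simp: span_insert)
  then obtain t where "x - s *\<^sub>R u = t *\<^sub>R v"
    by (auto simp: span_singleton)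
  then show thesis
    by (intro that[of s t]) (simp add: algebra_simps)
qed

text \<open>If the reverse inequality failed, the discriminant of the binary form
  $Q(s u + t v)$ would be negative and $Q$ would be negative definite on the
  plane spanned by $u$ and $v$.\<close>

lemma Qf_Bf_reverse_Cauchy_Schwarz:
  assumes sym: "transpose A = A" and ty: "type_r1_1 A" and u: "Qf A u < 0"
  shows "4 * Qf A u * Qf A v \<le> (Bf A u v)\<^sup>2"
proof (rule ccontr)
  define a b c where "a = Qf A u" and "b = Bf A u v" and "c = Qf A v"
  assume "\<not> ?thesis"
  then have disc: "b\<^sup>2 < 4 * a * c"
    by (simp add: a_def b_def c_def)
  have a: "a < 0"
    using u by (simp add: a_def)
  have binary_neg: "s\<^sup>2 * a + s * t * b + t\<^sup>2 * c < 0" if "s \<noteq> 0 \<or> t \<noteq> 0" for s t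
  proof -
    have "0 < (2 * a * s + b * t)\<^sup>2 + t\<^sup>2 * (4 * a * c - b\<^sup>2)"
      using that disc a by (cases "t = 0") (auto intro: add_nonneg_pos)
    also have "\<dots> = 4 * a * (s\<^sup>2 * a + s * t * b + t\<^sup>2 * c)"
      by (simp add: power2_eq_square algebra_simps)
    finally show ?thesis
      using a by (simp add: zero_less_mult_iff)
  qed
  have "v \<notin> span {u}"
  proof
    assume "v \<in> span {u}"
    then obtain k where "v = k *\<^sub>R u"
      by (auto simp: span_singleton)
    then have "b = 2 * k * a" "c = k\<^sup>2 * a"
      by (simp_all add: a_def b_def c_def Bf_scaleR_right Bf_self Qf_scaleR)
    with disc show False
      by (simp add: power2_eq_square algebra_simps)
  qed
  moreover have "u \<noteq> 0"
    using u by auto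
  ultimately have "independent {v, u}" and "v \<noteq> u"
    by (auto simp: independent_insert span_base)
  then have "dim (span {v, u}) = 2"
    using dim_span_eq_card_independent by fastforce
  moreover have "neg_def_on A (span {v, u})"
    unfolding neg_def_on_def
  proof (intro ballI impI)
    fix x assume "x \<in> span {v, u}" and "x \<noteq> 0"
    then obtain s t where "x = t *\<^sub>R u + s *\<^sub>R v" and "t \<noteq> 0 \<or> s \<noteq> 0"
      by (metis span_pair_obtain add.commute scaleR_zero_left add_0)
    then show "Qf A x < 0"
      using binary_neg[of t s] Qf_lincomb[OF sym, of t u s v] by (simp add: a_def b_def c_def)
  qed
  then have "dim (span {v, u}) \<le> 1"
    using ty subspace_span unfolding type_r1_1_def by blast
  ultimately show False
    by simp
qed

lemma Qf_Bf_reverse_Cauchy_Schwarz_eq: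
  assumes sym: "transpose A = A" and ty: "type_r1_1 A" and dA: "det A \<noteq> 0"
    and u: "Qf A u < 0" and eq: "(Bf A u v)\<^sup>2 = 4 * Qf A u * Qf A v"
  shows "v = (Bf A u v / (2 * Qf A u)) *\<^sub>R u"
proof -
  define l where "l = Bf A u v / (2 * Qf A u)"
  define w where "w = v - l *\<^sub>R u"
  have u_perp: "Bf A u x' = 0" if "x' = x - (Bf A u x / (2 * Qf A u)) *\<^sub>R u" for x x'
    using u that by (simp add: Bf_diff_right Bf_scaleR_right Bf_self)
  have Buw: "Bf A u w = 0"
    by (rule u_perp) (simp add: w_def l_def)
  have "Qf A w = Qf A v - l * Bf A u v + l\<^sup>2 * Qf A u"
    unfolding w_def using Qf_lincomb[OF sym, of 1 v "-l" u] Bf_commute[OF sym, of v u]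
    by (simp add: algebra_simps)
  also have "\<dots> = 0"
    using u eq by (simp add: l_def power2_eq_square field_simps)
  finally have Qw: "Qf A w = 0" .
  have "Bf A w x = 0" for x
  proof -
    define x' where "x' = x - (Bf A u x / (2 * Qf A u)) *\<^sub>R u"
    have Bux': "Bf A u x' = 0"
      by (rule u_perp) (simp add: x'_def)
    \<comment> \<open>$Q$ is nonnegative on $u^\perp$, so the linear term of $t \mapsto Q(w + t x')$ vanishes.\<close>
    have nonneg: "0 \<le> t * Bf A w x' + t\<^sup>2 * Qf A x'" for t
    proof -
      have "4 * Qf A u * Qf A (w + t *\<^sub>R x') \<le> 0"
        using Qf_Bf_reverse_Cauchy_Schwarz[OF sym ty u, of "w + t *\<^sub>R x'"]
        by (simp add: Bf_add_right Bf_scaleR_right Buw Bux')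
      then have "0 \<le> Qf A (w + t *\<^sub>R x')"
        using u by (simp add: mult_le_0_iff)
      then show ?thesis
        using Qf_lincomb[OF sym, of 1 w t x'] Qw by simp
    qed
    have "Bf A w x' = 0"
    proof (rule ccontr)
      assume nz: "Bf A w x' \<noteq> 0"
      define K where "K = \<bar>Qf A x'\<bar> + 1"
      have K: "0 < K" "Qf A x' - K < 0"
        by (auto simp: K_def)
      have "(- Bf A w x' / K) * Bf A w x' + (- Bf A w x' / K)\<^sup>2 * Qf A x'
          = (Bf A w x')\<^sup>2 * (Qf A x' - K) / K\<^sup>2"
        using K by (simp add: field_simps power2_eq_square)
      also have "\<dots> < 0"
        using nz K by (intro divide_neg_pos mult_pos_neg) auto
      finally show False
        using nonneg[of "- Bf A w x' / K"] by simp
    qed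
    moreover have "Bf A w u = 0"
      using Buw Bf_commute[OF sym] by metis
    ultimately show ?thesis
      by (simp add: x'_def Bf_diff_right Bf_scaleR_right)
  qed
  then have "w = 0"
    using Bf_nondegenerate[OF dA] by blast
  then show ?thesis
    by (simp add: w_def l_def)
qed

text \<open>Writing $v = \lambda c + w$ with $B(c, w) = 0$, this is $Q(w) - Q(\lambda c)$:
  the majorant of $Q$ attached to $c$, which flips the sign of $Q$ along $c$.\<close>

definition Qmaj :: "int^'n^'n \<Rightarrow> real^'n \<Rightarrow> real^'n \<Rightarrow> real" where
  "Qmaj A c v = Qf A v - (Bf A c v)\<^sup>2 / (2 * Qf A c)"

lemma Qmaj_scaleR: "Qmaj A c (k *\<^sub>R v) = k\<^sup>2 * Qmaj A c v"
  by (simp add: Qmaj_def Qf_scaleR Bf_scaleR_right power_mult_distrib right_diff_distrib)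

lemma Qmaj_pos:
  assumes sym: "transpose A = A" and ty: "type_r1_1 A" and dA: "det A \<noteq> 0"
    and c: "Qf A c < 0" and v: "v \<noteq> 0"
  shows "0 < Qmaj A c v"
proof -
  have "4 * Qf A c * Qf A v \<le> (Bf A c v)\<^sup>2"
    by (rule Qf_Bf_reverse_Cauchy_Schwarz[OF sym ty c])
  then have Qv: "(Bf A c v)\<^sup>2 / (4 * Qf A c) \<le> Qf A v"
    using c by (simp add: divide_le_eq mult.commute)
  show ?thesis
  proof (cases "Bf A c v = 0")
    case True
    have "Qf A v \<noteq> 0"
      using Qf_Bf_reverse_Cauchy_Schwarz_eq[OF sym ty dA c, of v] True v by auto
    with Qv True show ?thesis
      by (simp add: Qmaj_def)
  next
    case False
    then have "0 < - (Bf A c v)\<^sup>2 / (4 * Qf A c)"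
      using c by (simp add: divide_pos_neg)
    with Qv show ?thesis
      by (simp add: Qmaj_def field_simps)
  qed
qed

lemma Qmaj_ge_norm_sq:
  assumes sym: "transpose A = A" and ty: "type_r1_1 A" and dA: "det A \<noteq> 0"
    and c: "Qf A c < 0"
  obtains e where "0 < e" and "\<And>v. e * (norm v)\<^sup>2 \<le> Qmaj A c v"
proof -
  have "c \<noteq> 0"
    using c by auto
  then have "sphere (0::real^'n) 1 \<noteq> {}"
    by (auto intro!: exI[of _ "c /\<^sub>R norm c"])
  moreover have "continuous_on (sphere 0 1) (Qmaj A c)"
    unfolding Qmaj_def by (intro continuous_intros continuous_on_Qf continuous_on_Bf) (use c in auto)
  ultimately obtain x0 where x0: "x0 \<in> sphere 0 1"
    and min: "\<And>y. y \<in> sphere 0 1 \<Longrightarrow> Qmaj A c x0 \<le> Qmaj A c y"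
    using continuous_attains_inf[OF compact_sphere] by blast
  have "Qmaj A c x0 * (norm v)\<^sup>2 \<le> Qmaj A c v" for v
  proof (cases "v = 0")
    case True
    then show ?thesis
      by (simp add: Qmaj_def)
  next
    case False
    then have "Qmaj A c v = (norm v)\<^sup>2 * Qmaj A c (v /\<^sub>R norm v)"
      by (metis Qmaj_scaleR norm_eq_zero scaleR_scaleR divideR_right)
    moreover have "Qmaj A c x0 \<le> Qmaj A c (v /\<^sub>R norm v)"
      using False by (intro min) simp
    ultimately show ?thesis
      using mult_left_mono[of "Qmaj A c x0" "Qmaj A c (v /\<^sub>R norm v)" "(norm v)\<^sup>2"]
      by (simp add: mult.commute)
  qed
  moreover have "0 < Qmaj A c x0"
    using x0 by (intro Qmaj_pos[OF sym ty dA c]) auto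
  ultimately show thesis
    using that by blast
qed

text \<open>The combination $x = B(c_2,c_0)\, c_1 - B(c_1,c_0)\, c_2$ is orthogonal to $c_0$,
  hence $Q(x) \ge 0$; expanding $Q(x)$ shows that $B(c_1,c_2) \ge 0$ forces $Q(x) = 0$,
  so that $x = 0$ by the equality case.\<close>

lemma Bf_closed_cone_neg:
  assumes sym: "transpose A = A" and ty: "type_r1_1 A" and dA: "det A \<noteq> 0"
    and Q0: "Qf A c0 < 0" and q1: "Qf A c1 \<le> 0" and b1: "Bf A c1 c0 < 0"
    and q2: "Qf A c2 \<le> 0" and b2: "Bf A c2 c0 < 0"
  shows "Bf A c1 c2 < 0 \<or> (\<exists>t>0. c2 = t *\<^sub>R c1)"
proof (rule ccontr)
  assume "\<not> ?thesis"
  then have B12: "0 \<le> Bf A c1 c2" and not_parallel: "\<not> (\<exists>t>0. c2 = t *\<^sub>R c1)"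
    by auto
  define x where "x = Bf A c2 c0 *\<^sub>R c1 + (- Bf A c1 c0) *\<^sub>R c2"
  have Bx: "Bf A c0 x = 0"
    using Bf_commute[OF sym, of c0 c1] Bf_commute[OF sym, of c0 c2]
    by (simp add: x_def Bf_add_right Bf_diff_right Bf_scaleR_right)
  then have "4 * Qf A c0 * Qf A x \<le> 0"
    using Qf_Bf_reverse_Cauchy_Schwarz[OF sym ty Q0, of x] by simp
  then have "0 \<le> Qf A x"
    using Q0 by (simp add: mult_le_0_iff)
  moreover have "Qf A x = (Bf A c2 c0)\<^sup>2 * Qf A c1 - Bf A c2 c0 * Bf A c1 c0 * Bf A c1 c2
      + (Bf A c1 c0)\<^sup>2 * Qf A c2"
    using Qf_lincomb[OF sym, of "Bf A c2 c0" c1 "- Bf A c1 c0" c2] by (simp add: x_def)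
  moreover have "0 \<le> Bf A c2 c0 * Bf A c1 c0 * Bf A c1 c2"
    using b1 b2 B12 by (metis mult_nonneg_nonneg mult_neg_neg less_imp_le)
  moreover have "(Bf A c2 c0)\<^sup>2 * Qf A c1 \<le> 0" "(Bf A c1 c0)\<^sup>2 * Qf A c2 \<le> 0"
    using q1 q2 by (simp_all add: mult_nonneg_nonpos)
  ultimately have "Qf A x = 0"
    by linarith
  then have "x = 0"
    using Qf_Bf_reverse_Cauchy_Schwarz_eq[OF sym ty dA Q0, of x] Bx by simp
  then have "c2 = (Bf A c2 c0 / Bf A c1 c0) *\<^sub>R c1"
    using b1 by (simp add: x_def algebra_simps divideR_right eq_vector_fraction_iff)
  moreover have "0 < Bf A c2 c0 / Bf A c1 c0"
    using b1 b2 by (simp add: divide_neg_neg)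
  ultimately show False
    using not_parallel by blast
qed

lemma Bf_sq_gt_if_not_parallel:
  assumes sym: "transpose A = A" and ty: "type_r1_1 A" and dA: "det A \<noteq> 0"
    and q1: "Qf A c1 \<le> 0" and q2: "Qf A c2 \<le> 0" and B: "Bf A c1 c2 < 0"
    and not_parallel: "\<not> (\<exists>t>0. c2 = t *\<^sub>R c1)"
  shows "4 * Qf A c1 * Qf A c2 < (Bf A c1 c2)\<^sup>2"
proof (cases "Qf A c1 < 0")
  case True
  have "(Bf A c1 c2)\<^sup>2 \<noteq> 4 * Qf A c1 * Qf A c2"
  proof
    assume "(Bf A c1 c2)\<^sup>2 = 4 * Qf A c1 * Qf A c2"
    then have "c2 = (Bf A c1 c2 / (2 * Qf A c1)) *\<^sub>R c1"
      by (rule Qf_Bf_reverse_Cauchy_Schwarz_eq[OF sym ty dA True])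
    moreover have "0 < Bf A c1 c2 / (2 * Qf A c1)"
      using B True by (simp add: divide_neg_neg)
    ultimately show False
      using not_parallel by blast
  qed
  with Qf_Bf_reverse_Cauchy_Schwarz[OF sym ty True, of c2] show ?thesis
    by linarith
next
  case False
  with q1 B show ?thesis
    by simp
qed

section \<open>Linear growth of $Q$ between two rays of the closed cone\<close>

lemma le_square_plus_quarter: "(x::real) \<le> x\<^sup>2 + 1/4"
  using zero_le_power2[of "x - 1/2"] by (simp add: power2_eq_square algebra_simps)

lemma binary_form_ge_one_side:
  fixes Q1 Q2 B p q d :: real
  assumes "Q1 \<le> 0" "Q2 \<le> 0" "B < 0" "p * q \<le> 0" "0 < d" "Q1 < 0 \<or> d \<le> \<bar>p\<bar>"
  defines "k \<equiv> if Q1 < 0 then - Q1 else - B * d"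
  shows "k * \<bar>q\<bar> - k / 4 \<le> - Q2 * p\<^sup>2 + B * p * q - Q1 * q\<^sup>2"
proof -
  have "0 \<le> B * p * q" and "0 \<le> - Q2 * p\<^sup>2" and "0 \<le> - Q1 * q\<^sup>2"
    using assms(1-4) by (simp_all add: mult.assoc mult_nonpos_nonpos mult_nonpos_nonneg)
  moreover have "\<bar>q\<bar> - 1/4 \<le> q\<^sup>2"
    using le_square_plus_quarter[of "\<bar>q\<bar>"] by simp
  then have "Q1 < 0 \<Longrightarrow> - Q1 * (\<bar>q\<bar> - 1/4) \<le> - Q1 * q\<^sup>2"
    by (simp add: mult_left_mono)
  moreover have "- B * d * \<bar>q\<bar> \<le> B * p * q" if "d \<le> \<bar>p\<bar>"
  proof -
    have "- B * d * \<bar>q\<bar> \<le> - B * \<bar>p\<bar> * \<bar>q\<bar>"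
      using that assms(3) by (intro mult_right_mono mult_left_mono) auto
    also have "\<dots> = B * p * q"
      using assms(4) by (simp add: abs_mult[symmetric] abs_of_nonpos mult.assoc)
    finally show ?thesis .
  qed
  moreover have "0 \<le> - B * d"
    using assms(3,5) by (simp add: mult_nonpos_nonneg)
  ultimately show ?thesis
    using assms(6) by (auto simp: k_def algebra_simps)
qed

lemma binary_form_linear_lower_bound:
  fixes Q1 Q2 B d1 d2 :: real
  assumes "Q1 \<le> 0" "Q2 \<le> 0" "B < 0" "0 < d1" "0 < d2"
  obtains k C where "0 < k"
    and "\<And>p q. p * q \<le> 0 \<Longrightarrow> Q1 < 0 \<or> d1 \<le> \<bar>p\<bar> \<Longrightarrow> Q2 < 0 \<or> d2 \<le> \<bar>q\<bar> \<Longrightarrow>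
           k * (\<bar>p\<bar> + \<bar>q\<bar>) - C \<le> - Q2 * p\<^sup>2 + B * p * q - Q1 * q\<^sup>2"
proof -
  define k1 where "k1 = (if Q1 < 0 then - Q1 else - B * d1)"
  define k2 where "k2 = (if Q2 < 0 then - Q2 else - B * d2)"
  have k12: "0 < k1" "0 < k2"
    using assms by (auto simp: k1_def k2_def mult_neg_pos)
  have "min k1 k2 / 2 * (\<bar>p\<bar> + \<bar>q\<bar>) - (k1 + k2) / 8 \<le> - Q2 * p\<^sup>2 + B * p * q - Q1 * q\<^sup>2"
    if "p * q \<le> 0" "Q1 < 0 \<or> d1 \<le> \<bar>p\<bar>" "Q2 < 0 \<or> d2 \<le> \<bar>q\<bar>" for p q
  proof -
    define N where "N = - Q2 * p\<^sup>2 + B * p * q - Q1 * q\<^sup>2"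
    have "k1 * \<bar>q\<bar> - k1 / 4 \<le> N"
      unfolding k1_def N_def using assms that by (intro binary_form_ge_one_side) auto
    moreover have "k2 * \<bar>p\<bar> - k2 / 4 \<le> N"
    proof -
      have "k2 * \<bar>p\<bar> - k2 / 4 \<le> - Q1 * q\<^sup>2 + B * q * p - Q2 * p\<^sup>2"
        unfolding k2_def using assms that by (intro binary_form_ge_one_side) (auto simp: mult.commute)
      then show ?thesis
        by (simp add: N_def algebra_simps)
    qed
    ultimately have "(k2 * \<bar>p\<bar> + k1 * \<bar>q\<bar>) / 2 \<le> N + (k1 + k2) / 8"
      by (simp add: field_simps)
    moreover have "min k1 k2 / 2 * (\<bar>p\<bar> + \<bar>q\<bar>) \<le> (k2 * \<bar>p\<bar> + k1 * \<bar>q\<bar>) / 2"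
      by (simp add: distrib_left add_mono mult_right_mono)
    ultimately show ?thesis
      unfolding N_def[symmetric] by linarith
  qed
  with k12 show thesis
    by (intro that[of "min k1 k2 / 2" "(k1 + k2) / 8"]) auto
qed

text \<open>$-\mathrm{pair\_disc}$ is the Gram determinant of $c_1, c_2$ for $B$; for nonzero
  discriminant, \<open>pair_proj\<close> is the $B$-orthogonal projection onto $\operatorname{span}\{c_1, c_2\}$
  (and $0$ otherwise, by division by zero).\<close>

definition pair_disc :: "int^'n^'n \<Rightarrow> real^'n \<Rightarrow> real^'n \<Rightarrow> real" where
  "pair_disc A c1 c2 = (Bf A c1 c2)\<^sup>2 - 4 * Qf A c1 * Qf A c2"

definition pair_proj :: "int^'n^'n \<Rightarrow> real^'n \<Rightarrow> real^'n \<Rightarrow> real^'n \<Rightarrow> real^'n" where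
  "pair_proj A c1 c2 v =
     ((Bf A c1 c2 * Bf A c2 v - 2 * Qf A c2 * Bf A c1 v) / pair_disc A c1 c2) *\<^sub>R c1
   + ((Bf A c1 c2 * Bf A c1 v - 2 * Qf A c1 * Bf A c2 v) / pair_disc A c1 c2) *\<^sub>R c2"

lemma Bf_pair_proj_left:
  "Bf A (pair_proj A c1 c2 v) x =
     (Bf A c1 c2 * Bf A c2 v - 2 * Qf A c2 * Bf A c1 v) / pair_disc A c1 c2 * Bf A c1 x
   + (Bf A c1 c2 * Bf A c1 v - 2 * Qf A c1 * Bf A c2 v) / pair_disc A c1 c2 * Bf A c2 x"
  by (simp add: pair_proj_def Bf_add_left Bf_scaleR_left)

lemma Bf_pair_proj:
  assumes sym: "transpose A = A" and G: "pair_disc A c1 c2 \<noteq> 0"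
  shows "Bf A c1 (pair_proj A c1 c2 v) = Bf A c1 v" and "Bf A c2 (pair_proj A c1 c2 v) = Bf A c2 v"
proof -
  have B21: "Bf A c2 c1 = Bf A c1 c2"
    using Bf_commute[OF sym] by simp
  have "Bf A (pair_proj A c1 c2 v) c1 * pair_disc A c1 c2 = Bf A c1 v * pair_disc A c1 c2"
    "Bf A (pair_proj A c1 c2 v) c2 * pair_disc A c1 c2 = Bf A c2 v * pair_disc A c1 c2"
    unfolding Bf_pair_proj_left using G
    by (simp_all add: Bf_self B21 field_simps, simp_all add: pair_disc_def algebra_simps power2_eq_square)
  then show "Bf A c1 (pair_proj A c1 c2 v) = Bf A c1 v" and "Bf A c2 (pair_proj A c1 c2 v) = Bf A c2 v"
    using G Bf_commute[OF sym] by simp_all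
qed

lemma Qf_pair_proj_split:
  assumes sym: "transpose A = A" and G: "pair_disc A c1 c2 \<noteq> 0"
  shows "Qf A v = Qf A (pair_proj A c1 c2 v) + Qf A (v - pair_proj A c1 c2 v)"
proof -
  have "Bf A (pair_proj A c1 c2 v) (v - pair_proj A c1 c2 v) = 0"
    unfolding Bf_pair_proj_left using Bf_pair_proj[OF sym G] by (simp add: Bf_diff_right)
  then show ?thesis
    using Qf_add[OF sym, of "pair_proj A c1 c2 v" "v - pair_proj A c1 c2 v"] by simp
qed

lemma Qf_pair_proj:
  assumes sym: "transpose A = A" and G: "pair_disc A c1 c2 \<noteq> 0"
  shows "pair_disc A c1 c2 * Qf A (pair_proj A c1 c2 v) =
    - Qf A c2 * (Bf A c1 v)\<^sup>2 + Bf A c1 c2 * Bf A c1 v * Bf A c2 v - Qf A c1 * (Bf A c2 v)\<^sup>2"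
proof -
  have "2 * Qf A (pair_proj A c1 c2 v) = Bf A (pair_proj A c1 c2 v) (pair_proj A c1 c2 v)"
    by (simp add: Bf_self)
  also have "\<dots> = ((Bf A c1 c2 * Bf A c2 v - 2 * Qf A c2 * Bf A c1 v) * Bf A c1 v
      + (Bf A c1 c2 * Bf A c1 v - 2 * Qf A c1 * Bf A c2 v) * Bf A c2 v) / pair_disc A c1 c2"
    unfolding Bf_pair_proj_left Bf_pair_proj[OF sym G] by (simp add: add_divide_distrib)
  finally show ?thesis
    using G by (simp add: field_simps power2_eq_square)
qed

lemma norm_pair_proj_le:
  obtains D where "0 \<le> D"
    and "\<And>v. norm (pair_proj A c1 c2 v) \<le> D * (\<bar>Bf A c1 v\<bar> + \<bar>Bf A c2 v\<bar>)"
proof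
  define G M where "G = \<bar>pair_disc A c1 c2\<bar>" and "M = 2 * \<bar>Qf A c1\<bar> + 2 * \<bar>Qf A c2\<bar> + \<bar>Bf A c1 c2\<bar>"
  show "0 \<le> M / G * (norm c1 + norm c2)"
    by (simp add: G_def M_def)
  fix v
  define p q where "p = Bf A c1 v" and "q = Bf A c2 v"
  define \<alpha> \<beta> where "\<alpha> = (Bf A c1 c2 * q - 2 * Qf A c2 * p) / pair_disc A c1 c2"
    and "\<beta> = (Bf A c1 c2 * p - 2 * Qf A c1 * q) / pair_disc A c1 c2"
  have "\<bar>Bf A c1 c2 * q - 2 * Qf A c2 * p\<bar> \<le> M * (\<bar>p\<bar> + \<bar>q\<bar>)"
    "\<bar>Bf A c1 c2 * p - 2 * Qf A c1 * q\<bar> \<le> M * (\<bar>p\<bar> + \<bar>q\<bar>)"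
    unfolding M_def by (auto simp: abs_mult algebra_simps intro!: order.trans[OF abs_triangle_ineq4])
  then have "\<bar>\<alpha>\<bar> \<le> M / G * (\<bar>p\<bar> + \<bar>q\<bar>)" "\<bar>\<beta>\<bar> \<le> M / G * (\<bar>p\<bar> + \<bar>q\<bar>)"
    by (simp_all add: \<alpha>_def \<beta>_def G_def abs_div divide_right_mono)
  moreover have "norm (pair_proj A c1 c2 v) \<le> \<bar>\<alpha>\<bar> * norm c1 + \<bar>\<beta>\<bar> * norm c2"
    using norm_triangle_ineq[of "\<alpha> *\<^sub>R c1" "\<beta> *\<^sub>R c2"]
    by (simp add: pair_proj_def \<alpha>_def \<beta>_def p_def q_def)
  ultimately have "norm (pair_proj A c1 c2 v)
      \<le> M / G * (\<bar>p\<bar> + \<bar>q\<bar>) * norm c1 + M / G * (\<bar>p\<bar> + \<bar>q\<bar>) * norm c2"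
    by (meson add_mono mult_right_mono norm_ge_zero order_trans)
  also have "\<dots> = M / G * (norm c1 + norm c2) * (\<bar>p\<bar> + \<bar>q\<bar>)"
    by (simp add: algebra_simps add_divide_distrib)
  finally show "norm (pair_proj A c1 c2 v) \<le> M / G * (norm c1 + norm c2) * (\<bar>Bf A c1 v\<bar> + \<bar>Bf A c2 v\<bar>)"
    by (simp add: p_def q_def)
qed

lemma Qf_pair_proj_ge_linear:
  assumes sym: "transpose A = A" and q1: "Qf A c1 \<le> 0" and q2: "Qf A c2 \<le> 0"
    and B: "Bf A c1 c2 < 0" and G: "0 < pair_disc A c1 c2" and d: "0 < d1" "0 < d2"
  obtains k C where "0 < k"
    and "\<And>v. Bf A c1 v * Bf A c2 v \<le> 0 \<Longrightarrow> Qf A c1 < 0 \<or> d1 \<le> \<bar>Bf A c1 v\<bar> \<Longrightarrow>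
           Qf A c2 < 0 \<or> d2 \<le> \<bar>Bf A c2 v\<bar> \<Longrightarrow>
           k * (\<bar>Bf A c1 v\<bar> + \<bar>Bf A c2 v\<bar>) - C \<le> Qf A (pair_proj A c1 c2 v)"
proof -
  obtain k C where k: "0 < k" and binary: "\<And>p q. p * q \<le> 0 \<Longrightarrow> Qf A c1 < 0 \<or> d1 \<le> \<bar>p\<bar> \<Longrightarrow>
      Qf A c2 < 0 \<or> d2 \<le> \<bar>q\<bar> \<Longrightarrow>
      k * (\<bar>p\<bar> + \<bar>q\<bar>) - C \<le> - Qf A c2 * p\<^sup>2 + Bf A c1 c2 * p * q - Qf A c1 * q\<^sup>2"
    using binary_form_linear_lower_bound[OF q1 q2 B d] by blast
  show thesis
  proof (rule that[of "k / pair_disc A c1 c2" "C / pair_disc A c1 c2"])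
    fix v
    assume "Bf A c1 v * Bf A c2 v \<le> 0" "Qf A c1 < 0 \<or> d1 \<le> \<bar>Bf A c1 v\<bar>"
      "Qf A c2 < 0 \<or> d2 \<le> \<bar>Bf A c2 v\<bar>"
    then have "k * (\<bar>Bf A c1 v\<bar> + \<bar>Bf A c2 v\<bar>) - C \<le> pair_disc A c1 c2 * Qf A (pair_proj A c1 c2 v)"
      unfolding Qf_pair_proj[OF sym less_imp_neq[OF G, symmetric]] by (rule binary)
    then have "(k * (\<bar>Bf A c1 v\<bar> + \<bar>Bf A c2 v\<bar>) - C) / pair_disc A c1 c2
        \<le> Qf A (pair_proj A c1 c2 v)"
      using G by (simp add: pos_divide_le_eq mult.commute)
    then show "k / pair_disc A c1 c2 * (\<bar>Bf A c1 v\<bar> + \<bar>Bf A c2 v\<bar>) - C / pair_disc A c1 c2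
        \<le> Qf A (pair_proj A c1 c2 v)"
      by (simp add: diff_divide_distrib)
  qed (use k G in simp)
qed

lemma Qf_ge_norm_sq_orthogonal:
  assumes sym: "transpose A = A" and ty: "type_r1_1 A" and dA: "det A \<noteq> 0"
    and c: "Qf A c < 0"
  obtains e where "0 < e" and "\<And>w. Bf A c w = 0 \<Longrightarrow> e * (norm w)\<^sup>2 \<le> Qf A w"
proof -
  obtain e where e: "0 < e" and maj: "\<And>v. e * (norm v)\<^sup>2 \<le> Qmaj A c v"
    using Qmaj_ge_norm_sq[OF sym ty dA c] by blast
  show thesis
  proof (rule that[OF e])
    fix w assume "Bf A c w = 0"
    then show "e * (norm w)\<^sup>2 \<le> Qf A w"
      using maj[of w] by (simp add: Qmaj_def)
  qed
qed

lemma linear_lower_bound_of_split: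
  fixes D k e C P w x a b :: real
  assumes "0 \<le> D" "0 < k" "0 < e" "0 \<le> P" "0 \<le> w"
    and "x \<le> D * P + w" and "k * P - C \<le> a" and "e * w\<^sup>2 \<le> b"
  shows "min (k / (D + 1)) e * x - (C + e / 4) \<le> a + b"
proof -
  define \<kappa> where "\<kappa> = min (k / (D + 1)) e"
  have "\<kappa> * D \<le> k / (D + 1) * D"
    using assms(1) by (intro mult_right_mono) (auto simp: \<kappa>_def)
  also have "\<dots> = k * (D / (D + 1))"
    by simp
  also have "\<dots> \<le> k"
    using assms(1,2) by (intro mult_left_le) simp_all
  finally have \<kappa>D: "\<kappa> * D \<le> k" .
  have "\<kappa> * x \<le> \<kappa> * (D * P + w)"
    using assms(1-3,6) by (intro mult_left_mono) (auto simp: \<kappa>_def)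
  also have "\<dots> = \<kappa> * D * P + \<kappa> * w"
    by (simp add: algebra_simps)
  also have "\<dots> \<le> k * P + e * w"
    using \<kappa>D assms(4,5) by (intro add_mono mult_right_mono) (auto simp: \<kappa>_def)
  finally have "\<kappa> * x \<le> k * P + e * w" .
  moreover have "e * w \<le> e * w\<^sup>2 + e / 4"
    using mult_left_mono[OF le_square_plus_quarter[of w], of e] assms(3) by (simp add: algebra_simps)
  ultimately show ?thesis
    using assms(7,8) by (simp add: \<kappa>_def)
qed

lemma Qf_ge_linear_between:
  assumes sym: "transpose A = A" and ty: "type_r1_1 A" and dA: "det A \<noteq> 0"
    and q1: "Qf A c1 \<le> 0" and q2: "Qf A c2 \<le> 0" and B: "Bf A c1 c2 < 0"
    and not_parallel: "\<not> (\<exists>t>0. c2 = t *\<^sub>R c1)"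
    and sep1: "Qf A c1 < 0 \<or> (\<exists>d>0. \<forall>v\<in>V. d \<le> \<bar>Bf A c1 v\<bar>)"
    and sep2: "Qf A c2 < 0 \<or> (\<exists>d>0. \<forall>v\<in>V. d \<le> \<bar>Bf A c2 v\<bar>)"
  obtains k C where "0 < k"
    and "\<And>v. v \<in> V \<Longrightarrow> Bf A c1 v * Bf A c2 v \<le> 0 \<Longrightarrow> k * norm v - C \<le> Qf A v"
proof -
  obtain d1 where d1: "0 < d1" "Qf A c1 < 0 \<or> (\<forall>v\<in>V. d1 \<le> \<bar>Bf A c1 v\<bar>)"
    using sep1 zero_less_one by blast
  obtain d2 where d2: "0 < d2" "Qf A c2 < 0 \<or> (\<forall>v\<in>V. d2 \<le> \<bar>Bf A c2 v\<bar>)"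
    using sep2 zero_less_one by blast
  have G: "0 < pair_disc A c1 c2"
    using Bf_sq_gt_if_not_parallel[OF sym ty dA q1 q2 B not_parallel] by (simp add: pair_disc_def)
  then have G0: "pair_disc A c1 c2 \<noteq> 0"
    by simp
  obtain D where D: "0 \<le> D"
    and proj_norm: "\<And>v. norm (pair_proj A c1 c2 v) \<le> D * (\<bar>Bf A c1 v\<bar> + \<bar>Bf A c2 v\<bar>)"
    using norm_pair_proj_le[of A c1 c2] by blast
  obtain k C where k: "0 < k" and proj_Q: "\<And>v. Bf A c1 v * Bf A c2 v \<le> 0 \<Longrightarrow>
      Qf A c1 < 0 \<or> d1 \<le> \<bar>Bf A c1 v\<bar> \<Longrightarrow> Qf A c2 < 0 \<or> d2 \<le> \<bar>Bf A c2 v\<bar> \<Longrightarrow>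
      k * (\<bar>Bf A c1 v\<bar> + \<bar>Bf A c2 v\<bar>) - C \<le> Qf A (pair_proj A c1 c2 v)"
    using Qf_pair_proj_ge_linear[OF sym q1 q2 B G d1(1) d2(1)] by blast
  have "Qf A (c1 + c2) < 0"
    using Qf_add[OF sym, of c1 c2] q1 q2 B by simp
  then obtain e where e: "0 < e" and perp: "\<And>w. Bf A (c1 + c2) w = 0 \<Longrightarrow> e * (norm w)\<^sup>2 \<le> Qf A w"
    using Qf_ge_norm_sq_orthogonal[OF sym ty dA] by blast
  have "min (k / (D + 1)) e * norm v - (C + e / 4) \<le> Qf A v"
    if v: "v \<in> V" and pq: "Bf A c1 v * Bf A c2 v \<le> 0" for v
  proof -
    define P h where "P = \<bar>Bf A c1 v\<bar> + \<bar>Bf A c2 v\<bar>" and "h = pair_proj A c1 c2 v"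
    have "Bf A (c1 + c2) (v - h) = 0"
      using Bf_pair_proj[OF sym G0] by (simp add: h_def Bf_add_left Bf_diff_right)
    moreover have "k * P - C \<le> Qf A h"
      unfolding P_def h_def using d1(2) d2(2) v by (intro proj_Q pq) auto
    moreover have "norm v \<le> D * P + norm (v - h)"
      using norm_triangle_ineq[of h "v - h"] proj_norm[of v] by (simp add: h_def P_def)
    ultimately have "min (k / (D + 1)) e * norm v - (C + e / 4) \<le> Qf A h + Qf A (v - h)"
      using D k e perp[of "v - h"] by (intro linear_lower_bound_of_split) (auto simp: P_def)
    then show ?thesis
      using Qf_pair_proj_split[OF sym G0, of v] by (simp add: h_def)
  qed
  moreover have "0 < min (k / (D + 1)) e"
    using k D e by simp
  ultimately show thesis
    using that by blast
qed

section \<open>The error function\<close>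

definition gauss :: "real \<Rightarrow> real" where
  "gauss t = exp (- pi * t\<^sup>2)"

lemma integrable_on_gauss: "gauss integrable_on {a..b}"
  unfolding gauss_def by (intro integrable_continuous_interval continuous_intros)

lemma gauss_has_integral_half: "(gauss has_integral 1/2) {0..}"
proof -
  define f where "f = (\<lambda>x::real. indicator {0..} x *\<^sub>R exp (- x\<^sup>2))"
  have "has_bochner_integral lborel f (sqrt pi / 2)"
    unfolding f_def by (rule gaussian_moment_0)
  then have int: "integrable lborel f" and val: "integral\<^sup>L lborel f = sqrt pi / 2"
    by (auto simp: has_bochner_integral_iff)
  have scaled: "(\<lambda>x. f (0 + sqrt pi * x)) = (\<lambda>x. if x \<in> {0..} then gauss x else 0)"
    by (auto simp: f_def gauss_def indicator_def fun_eq_iff zero_le_mult_iff power_mult_distrib)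
      (use pi_gt_zero in linarith)
  have "integrable lborel (\<lambda>x. f (0 + sqrt pi * x))"
    using lborel_integrable_real_affine[OF int, of "sqrt pi" 0] by simp
  moreover have "integral\<^sup>L lborel (\<lambda>x. f (0 + sqrt pi * x)) = 1/2"
    using lborel_integral_real_affine[of "sqrt pi" f 0] val by simp
  ultimately have "((\<lambda>x. if x \<in> {0..} then gauss x else 0) has_integral 1/2) UNIV"
    using has_integral_integral_lborel unfolding scaled by metis
  then show ?thesis
    by (simp only: has_integral_restrict_UNIV)
qed

lemma integral_gauss_le_half: "integral {0..u} gauss \<le> 1/2"
proof -
  have "integral {0..u} gauss \<le> integral {0..} gauss"
    using integrable_on_gauss gauss_has_integral_half
    by (intro integral_subset_le) (auto simp: gauss_def)
  then show ?thesis
    using gauss_has_integral_half by (simp add: integral_unique)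
qed

lemma integral_gauss_tendsto_half: "(\<lambda>k. integral {0..real k} gauss) \<longlonglongrightarrow> 1/2"
proof -
  define f where "f = (\<lambda>(k::nat) x. if x \<in> {0..real k} then gauss x else 0)"
  have f: "(f k has_integral integral {0..real k} gauss) {0..}" for k
    using has_integral_restrict[of "{0..real k}" "{0..}" gauss] integrable_on_gauss[of 0 "real k"]
    by (auto simp: f_def)
  have "(\<lambda>k. integral {0..} (f k)) \<longlonglongrightarrow> integral {0..} gauss"
  proof (rule dominated_convergence(2))
    show "f k integrable_on {0..}" for k
      using f by blast
    show "gauss integrable_on {0..}"
      using gauss_has_integral_half by blast
    show "norm (f k x) \<le> gauss x" for k x
      by (auto simp: f_def gauss_def)
    show "(\<lambda>k. f k x) \<longlonglongrightarrow> gauss x" if "x \<in> {0..}" for x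
    proof (rule tendsto_eventually, rule eventually_sequentiallyI)
      fix k assume "nat \<lceil>x\<rceil> \<le> k"
      then have "x \<le> real k"
        by linarith
      with that show "f k x = gauss x"
        by (simp add: f_def)
    qed
  qed
  moreover have "integral {0..} (f k) = integral {0..real k} gauss" for k
    using f by (rule integral_unique)
  ultimately show ?thesis
    using gauss_has_integral_half by (simp add: integral_unique)
qed

text \<open>The tail $\int_u^\infty$ is bounded by $e^{-\pi u^2}/2$ because
  $e^{-\pi (u+s)^2} \le e^{-\pi u^2} e^{-\pi s^2}$ for $u, s \ge 0$.\<close>

lemma integral_gauss_tail:
  assumes u: "0 \<le> u"
  shows "1/2 \<le> integral {0..u} gauss + exp (- pi * u\<^sup>2) / 2"
proof (rule LIMSEQ_le_const2[OF integral_gauss_tendsto_half], intro exI allI impI)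
  fix k :: nat assume "nat \<lceil>u\<rceil> \<le> k"
  then have k: "u \<le> real k"
    by linarith
  have "integral {0..real k} gauss = integral {0..u} gauss + integral {u..real k} gauss"
    using Henstock_Kurzweil_Integration.integral_combine[of 0 u "real k" gauss] u k integrable_on_gauss
    by simp
  moreover have "integral {u..real k} gauss = integral {0..real k - u} (gauss \<circ> (+) u)"
    using integral_shift_Icc_real[of 0 "real k - u" gauss u] by simp
  moreover have "integral {0..real k - u} (gauss \<circ> (+) u)
      \<le> integral {0..real k - u} (\<lambda>s. exp (- pi * u\<^sup>2) * gauss s)"
  proof (rule integral_le)
    show "(gauss \<circ> (+) u) integrable_on {0..real k - u}"
      unfolding gauss_def o_def by (intro integrable_continuous_interval continuous_intros)
    show "(\<lambda>s. exp (- pi * u\<^sup>2) * gauss s) integrable_on {0..real k - u}"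
      unfolding gauss_def by (intro integrable_continuous_interval continuous_intros)
    fix s assume "s \<in> {0..real k - u}"
    then have "- pi * (u + s)\<^sup>2 \<le> - pi * u\<^sup>2 + - pi * s\<^sup>2"
      using u by (simp add: power2_eq_square algebra_simps)
    then show "(gauss \<circ> (+) u) s \<le> exp (- pi * u\<^sup>2) * gauss s"
      by (simp add: gauss_def flip: exp_add)
  qed
  moreover have "integral {0..real k - u} (\<lambda>s. exp (- pi * u\<^sup>2) * gauss s) \<le> exp (- pi * u\<^sup>2) / 2"
    using integral_gauss_le_half[of "real k - u"] by simp
  ultimately show "integral {0..real k} gauss \<le> integral {0..u} gauss + exp (- pi * u\<^sup>2) / 2"
    by linarith
qed

lemma Ef_eq_integral_gauss:
  "Ef u = 2 * (if 0 \<le> u then integral {0..u} gauss else - integral {0..-u} gauss)"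
proof -
  have "(\<lambda>x. gauss (- x)) = gauss"
    by (simp add: gauss_def fun_eq_iff)
  then have "integral {u..0} gauss = integral {0..-u} gauss"
    using Henstock_Kurzweil_Integration.integral_reflect_real[of 0 u gauss] by simp
  then show ?thesis
    unfolding Ef_def gauss_def[symmetric] by simp
qed

lemma sgn_minus_Ef_bound: "\<bar>sgn u - Ef u\<bar> \<le> exp (- pi * u\<^sup>2)"
  using integral_gauss_le_half[of "\<bar>u\<bar>"] integral_gauss_tail[of "\<bar>u\<bar>"]
  by (cases u "0::real" rule: linorder_cases) (auto simp: Ef_eq_integral_gauss)

section \<open>Exponential decay on shifted lattices\<close>

lemma summable_on_exp_nat:
  assumes "0 < m"
  shows "(\<lambda>k::nat. exp (- m * real k)) summable_on UNIV"
proof -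
  have "summable (\<lambda>k::nat. (exp (- m)) ^ k)"
    using assms by (intro summable_geometric) simp
  then show ?thesis
    by (subst summable_on_UNIV_nonneg_real_iff) (auto simp: mult.commute simp flip: exp_of_nat_mult)
qed

lemma summable_on_exp_abs_int:
  assumes "0 < m"
  shows "(\<lambda>k::int. exp (- m * \<bar>real_of_int k\<bar>)) summable_on UNIV"
proof -
  let ?f = "\<lambda>k::int. exp (- m * \<bar>real_of_int k\<bar>)"
  have "?f summable_on range int"
    using summable_on_exp_nat[OF assms] by (subst summable_on_reindex) (auto simp: o_def)
  moreover have "(\<lambda>k::nat. exp (- m) * exp (- m * real k)) summable_on UNIV"
    by (intro summable_on_cmult_right summable_on_exp_nat assms)
  then have "?f summable_on range (\<lambda>k. - int (Suc k))"
    by (subst summable_on_reindex) (auto simp: inj_on_def o_def algebra_simps simp flip: exp_add)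
  ultimately have "?f summable_on (range int \<union> range (\<lambda>k. - int (Suc k)))"
    by (rule summable_on_Un_disjoint) auto
  moreover have "range int \<union> range (\<lambda>k. - int (Suc k)) = UNIV"
  proof -
    have "k \<in> range int \<union> range (\<lambda>k. - int (Suc k))" for k :: int
    proof (cases "0 \<le> k")
      case True
      then show ?thesis
        by (auto intro!: image_eqI[of _ _ "nat k"])
    next
      case False
      then show ?thesis
        by (auto intro!: image_eqI[of _ _ "nat (- k - 1)"])
    qed
    then show ?thesis
      by auto
  qed
  ultimately show ?thesis
    by simp
qed

lemma summable_on_prod_exp_abs:
  assumes "0 < m"
  shows "(\<lambda>n::int^'n. \<Prod>i\<in>UNIV. exp (- m * \<bar>real_of_int (n$i)\<bar>)) summable_on UNIV"
proof -
  let ?f = "\<lambda>g. \<Prod>i\<in>(UNIV::'n set). exp (- m * \<bar>real_of_int (g i)\<bar>)"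
  have "Infinite_Set_Sum.abs_summable_on ?f (PiE UNIV (\<lambda>_. UNIV))"
  proof (rule abs_summable_on_prod_PiE)
    show "Infinite_Set_Sum.abs_summable_on (\<lambda>k::int. exp (- m * \<bar>real_of_int k\<bar>)) UNIV" for i :: 'n
      using summable_on_exp_abs_int[OF assms]
        abs_summable_equivalent[of "\<lambda>k::int. exp (- m * \<bar>real_of_int k\<bar>)" UNIV]
      by simp
  qed auto
  then have "?f summable_on UNIV"
    by (simp add: abs_summable_equivalent[symmetric] abs_prod)
  moreover have "range vec_nth = (UNIV :: ('n \<Rightarrow> int) set)"
    by (auto intro!: image_eqI[of _ vec_nth "vec_lambda _"])
  ultimately have "(?f \<circ> vec_nth) summable_on UNIV"
    by (subst summable_on_reindex[symmetric]) (auto simp: inj_on_def vec_eq_iff)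
  then show ?thesis
    by (simp add: o_def)
qed

text \<open>Uses $\sum_i |n_i| \le r \|n\|$ to dominate by a product of one-dimensional series.\<close>

lemma summable_on_exp_norm_lattice:
  fixes a :: "real^'n"
  assumes l: "0 < l"
  shows "(\<lambda>n::int^'n. exp (- l * norm (int_vec n + a))) summable_on UNIV"
proof -
  define m where "m = l / real CARD('n)"
  have m: "0 < m"
    using l by (simp add: m_def)
  have "exp (- l * norm (int_vec n + a))
      \<le> exp (l * norm a) * (\<Prod>i\<in>UNIV. exp (- m * \<bar>real_of_int (n$i)\<bar>))" for n
  proof -
    have "(\<Sum>i\<in>UNIV. \<bar>real_of_int (n$i)\<bar>) \<le> (\<Sum>i\<in>(UNIV::'n set). norm (int_vec n))"
      using component_le_norm_cart[of "int_vec n"] by (intro sum_mono) (simp add: int_vec_def)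
    then have "m * (\<Sum>i\<in>UNIV. \<bar>real_of_int (n$i)\<bar>) \<le> l * norm (int_vec n)"
      using l by (simp add: m_def field_simps)
    moreover have "l * norm (int_vec n) \<le> l * norm (int_vec n + a) + l * norm a"
      using l norm_triangle_ineq4[of "int_vec n + a" a] by (simp flip: distrib_left)
    ultimately have "- l * norm (int_vec n + a) \<le> l * norm a + - m * (\<Sum>i\<in>UNIV. \<bar>real_of_int (n$i)\<bar>)"
      by linarith
    then have "exp (- l * norm (int_vec n + a))
        \<le> exp (l * norm a + - m * (\<Sum>i\<in>UNIV. \<bar>real_of_int (n$i)\<bar>))"
      by simp
    then show ?thesis
      by (simp add: exp_add exp_sum sum_distrib_left)
  qed
  then show ?thesis
    by (rule summable_on_comparison_test[OF summable_on_cmult_right[OF summable_on_prod_exp_abs[OF m]]])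
      simp
qed

definition exp_decay_on :: "('a::real_normed_vector \<Rightarrow> real) \<Rightarrow> 'a set \<Rightarrow> bool" where
  "exp_decay_on f S \<longleftrightarrow> (\<exists>K l. 0 < l \<and> (\<forall>v\<in>S. f v \<le> K * exp (- l * norm v)))"

lemma exp_decay_onI:
  assumes "0 < l" and "\<And>v. v \<in> S \<Longrightarrow> f v \<le> K * exp (- l * norm v)"
  shows "exp_decay_on f S"
  using assms unfolding exp_decay_on_def by blast

lemma exp_decay_on_mono:
  assumes "exp_decay_on g S" and "\<And>v. v \<in> S \<Longrightarrow> f v \<le> g v"
  shows "exp_decay_on f S"
  using assms unfolding exp_decay_on_def by (meson order_trans)

lemma exp_decay_on_add:
  assumes "exp_decay_on f S" and "exp_decay_on g S"
  shows "exp_decay_on (\<lambda>v. f v + g v) S"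
proof -
  obtain K1 l1 K2 l2 where l: "0 < l1" "0 < l2"
    and f: "\<And>v. v \<in> S \<Longrightarrow> f v \<le> K1 * exp (- l1 * norm v)"
    and g: "\<And>v. v \<in> S \<Longrightarrow> g v \<le> K2 * exp (- l2 * norm v)"
    using assms unfolding exp_decay_on_def by metis
  have slower: "K * exp (- l' * norm v) \<le> \<bar>K\<bar> * exp (- min l1 l2 * norm v)"
    if "min l1 l2 \<le> l'" for K l' and v :: 'a
  proof -
    have "K * exp (- l' * norm v) \<le> \<bar>K\<bar> * exp (- l' * norm v)"
      by (simp add: mult_right_mono)
    also have "\<dots> \<le> \<bar>K\<bar> * exp (- min l1 l2 * norm v)"
      using that by (intro mult_left_mono) (auto simp: mult_right_mono)
    finally show ?thesis .
  qed
  show ?thesis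
  proof (rule exp_decay_onI[where K = "\<bar>K1\<bar> + \<bar>K2\<bar>"])
    fix v assume "v \<in> S"
    then show "f v + g v \<le> (\<bar>K1\<bar> + \<bar>K2\<bar>) * exp (- min l1 l2 * norm v)"
      using f[of v] g[of v] slower[of l1 K1 v] slower[of l2 K2 v]
      unfolding distrib_right by linarith
  qed (use l in simp)
qed

lemma summable_on_lattice_if_exp_decay_on:
  fixes a :: "real^'n"
  assumes "exp_decay_on f (range (\<lambda>n. int_vec n + a))" and "\<And>v. 0 \<le> f v"
  shows "(\<lambda>n. f (int_vec n + a)) summable_on UNIV"
proof -
  obtain K l where l: "0 < l" and f: "\<And>n. f (int_vec n + a) \<le> K * exp (- l * norm (int_vec n + a))"
    using assms(1) unfolding exp_decay_on_def by blast
  show ?thesis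
    using summable_on_cmult_right[OF summable_on_exp_norm_lattice[OF l]] f assms(2)
    by (rule summable_on_comparison_test)
qed

lemma CQbarD:
  assumes "c \<in> CQbar A c0"
  shows "Qf A c \<le> 0" and "Bf A c c0 < 0" and "c \<in> CQ A c0 \<longleftrightarrow> Qf A c < 0"
  using assms by (auto simp: CQbar_def CQ_def SQ_def)

lemma Ints_add_bounded_away:
  fixes b :: real
  assumes "b \<notin> \<int>"
  obtains d where "0 < d" and "\<And>x. x \<in> \<int> \<Longrightarrow> d \<le> \<bar>x + b\<bar>"
proof
  define d where "d = min (b - of_int \<lfloor>b\<rfloor>) (of_int \<lceil>b\<rceil> - b)"
  have "of_int \<lfloor>b\<rfloor> < b" "b < of_int \<lceil>b\<rceil>"
    using assms by (metis Ints_of_int of_int_floor_le order_le_neq_trans,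
        metis Ints_of_int le_of_int_ceiling order_le_neq_trans)
  then show "0 < d"
    by (simp add: d_def)
  fix x :: real assume "x \<in> \<int>"
  then obtain j where x: "x = of_int j"
    by (auto elim: Ints_cases)
  show "d \<le> \<bar>x + b\<bar>"
  proof (cases "0 \<le> x + b")
    case True
    then have "- j \<le> \<lfloor>b\<rfloor>"
      by (simp add: x le_floor_iff)
    with True show ?thesis
      by (simp add: x d_def)
  next
    case False
    then have "\<lceil>b\<rceil> \<le> - j"
      by (simp add: x ceiling_le_iff)
    with False show ?thesis
      by (simp add: x d_def)
  qed
qed

lemma CQbar_lattice_separated:
  assumes c: "c \<in> CQbar A c0" and a: "a \<in> Rset A c0 c"
  shows "Qf A c < 0 \<or> (\<exists>d>0. \<forall>v\<in>range (\<lambda>n. int_vec n + a). d \<le> \<bar>Bf A c v\<bar>)"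
proof (cases "c \<in> CQ A c0")
  case True
  with c show ?thesis
    by (simp add: CQbarD)
next
  case False
  with c obtain m where m: "c = int_vec m"
    by (auto simp: CQbar_def SQ_def primitive_int_def)
  from False a have "Bf A c a \<notin> \<int>"
    by (simp add: Rset_def)
  then obtain d where d: "0 < d" and "\<And>x. x \<in> \<int> \<Longrightarrow> d \<le> \<bar>x + Bf A c a\<bar>"
    using Ints_add_bounded_away by blast
  then have "d \<le> \<bar>Bf A c (int_vec n + a)\<bar>" for n
    using Bf_int_vec_Ints[of A m n] by (simp add: m Bf_add_right)
  with d show ?thesis
    by blast
qed

text \<open>On $C_Q$ the error $|\rho^c - \operatorname{sgn} B(c,\cdot)|$ is a Gaussian in $B(c,\nu)$,
  which turns $Q$ into its majorant; on $S_Q$ it vanishes.\<close>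

lemma rho_c_minus_sgn_exp_decay:
  assumes sym: "transpose A = A" and ty: "type_r1_1 A" and dA: "det A \<noteq> 0"
    and c: "c \<in> CQbar A c0" and y: "0 < Im \<tau>"
  shows "exp_decay_on (\<lambda>v. \<bar>rho_c A c0 c v \<tau> - sgn (Bf A c v)\<bar> * exp (- 2 * pi * Im \<tau> * Qf A v)) S"
proof (cases "c \<in> CQ A c0")
  case True
  then have Qc: "Qf A c < 0"
    by (simp add: CQ_def)
  obtain e where e: "0 < e" and maj: "\<And>v. e * (norm v)\<^sup>2 \<le> Qmaj A c v"
    using Qmaj_ge_norm_sq[OF sym ty dA Qc] by blast
  define l where "l = 2 * pi * Im \<tau> * e"
  show ?thesis
  proof (rule exp_decay_onI[where l = l and K = "exp (l / 4)"])
    fix v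
    define u where "u = Bf A c v / sqrt (- Qf A c) * sqrt (Im \<tau>)"
    have "sgn u = sgn (Bf A c v)"
      using Qc y by (simp add: u_def sgn_mult sgn_divide)
    then have "\<bar>rho_c A c0 c v \<tau> - sgn (Bf A c v)\<bar> = \<bar>sgn u - Ef u\<bar>"
      using True by (simp add: rho_c_def u_def abs_minus_commute)
    also have "\<dots> \<le> exp (- pi * u\<^sup>2)"
      by (rule sgn_minus_Ef_bound)
    also have "- pi * u\<^sup>2 = - 2 * pi * Im \<tau> * (Qmaj A c v - Qf A v)"
      using Qc y by (simp add: u_def Qmaj_def power_mult_distrib power_divide field_simps)
    finally have "\<bar>rho_c A c0 c v \<tau> - sgn (Bf A c v)\<bar> \<le> exp (- 2 * pi * Im \<tau> * (Qmaj A c v - Qf A v))" .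
    then have "\<bar>rho_c A c0 c v \<tau> - sgn (Bf A c v)\<bar> * exp (- 2 * pi * Im \<tau> * Qf A v)
        \<le> exp (- 2 * pi * Im \<tau> * (Qmaj A c v - Qf A v)) * exp (- 2 * pi * Im \<tau> * Qf A v)"
      by (rule mult_right_mono) simp
    also have "\<dots> = exp (- 2 * pi * Im \<tau> * Qmaj A c v)"
      by (simp add: algebra_simps flip: exp_add)
    also have "\<dots> \<le> exp (l / 4 + - l * norm v)"
    proof -
      have "e * norm v - e / 4 \<le> e * (norm v)\<^sup>2"
        using mult_left_mono[OF le_square_plus_quarter[of "norm v"], of e] e
        by (simp add: algebra_simps)
      then have "2 * pi * Im \<tau> * (e * norm v - e / 4) \<le> 2 * pi * Im \<tau> * Qmaj A c v"
        using maj[of v] y by (intro mult_left_mono) auto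
      then show ?thesis
        by (simp add: l_def algebra_simps)
    qed
    finally show "\<bar>rho_c A c0 c v \<tau> - sgn (Bf A c v)\<bar> * exp (- 2 * pi * Im \<tau> * Qf A v)
        \<le> exp (l / 4) * exp (- l * norm v)"
      by (simp only: exp_add)
  qed (use e y in \<open>simp add: l_def\<close>)
next
  case False
  then show ?thesis
    by (intro exp_decay_onI[where l = 1 and K = 0]) (simp_all add: rho_c_def)
qed

lemma mult_nonpos_if_sgn_neq:
  fixes p q :: real
  assumes "sgn p \<noteq> sgn q"
  shows "p * q \<le> 0"
  using assms by (auto simp: sgn_real_def mult_le_0_iff split: if_splits)

lemma sgn_mismatch_exp_decay:
  assumes sym: "transpose A = A" and ty: "type_r1_1 A" and dA: "det A \<noteq> 0"
    and Q0: "Qf A c0 < 0" and c1: "c1 \<in> CQbar A c0" and c2: "c2 \<in> CQbar A c0" and y: "0 < y"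
    and sep1: "Qf A c1 < 0 \<or> (\<exists>d>0. \<forall>v\<in>V. d \<le> \<bar>Bf A c1 v\<bar>)"
    and sep2: "Qf A c2 < 0 \<or> (\<exists>d>0. \<forall>v\<in>V. d \<le> \<bar>Bf A c2 v\<bar>)"
  shows "exp_decay_on (\<lambda>v. \<bar>sgn (Bf A c1 v) - sgn (Bf A c2 v)\<bar> * exp (- 2 * pi * y * Qf A v)) V"
proof (cases "\<exists>t>0. c2 = t *\<^sub>R c1")
  case True
  then have "sgn (Bf A c2 v) = sgn (Bf A c1 v)" for v
    by (auto simp: Bf_scaleR_left sgn_mult)
  then show ?thesis
    by (intro exp_decay_onI[where l = 1 and K = 0]) simp_all
next
  case False
  have "Bf A c1 c2 < 0"
    using Bf_closed_cone_neg[OF sym ty dA Q0 CQbarD(1,2)[OF c1] CQbarD(1,2)[OF c2]] False by blast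
  then obtain k C where k: "0 < k"
    and growth: "\<And>v. v \<in> V \<Longrightarrow> Bf A c1 v * Bf A c2 v \<le> 0 \<Longrightarrow> k * norm v - C \<le> Qf A v"
    using Qf_ge_linear_between[OF sym ty dA CQbarD(1)[OF c1] CQbarD(1)[OF c2] _ False sep1 sep2]
    by blast
  show ?thesis
  proof (rule exp_decay_onI[where l = "2 * pi * y * k" and K = "2 * exp (2 * pi * y * C)"])
    fix v assume v: "v \<in> V"
    show "\<bar>sgn (Bf A c1 v) - sgn (Bf A c2 v)\<bar> * exp (- 2 * pi * y * Qf A v)
        \<le> 2 * exp (2 * pi * y * C) * exp (- (2 * pi * y * k) * norm v)"
    proof (cases "sgn (Bf A c1 v) = sgn (Bf A c2 v)")
      case False
      then have "k * norm v - C \<le> Qf A v"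
        using growth v mult_nonpos_if_sgn_neq by blast
      then have "2 * pi * y * (k * norm v - C) \<le> 2 * pi * y * Qf A v"
        using y by (intro mult_left_mono) auto
      then have "exp (- 2 * pi * y * Qf A v) \<le> exp (2 * pi * y * C + - (2 * pi * y * k) * norm v)"
        by (simp add: algebra_simps)
      then have "exp (- 2 * pi * y * Qf A v) \<le> exp (2 * pi * y * C) * exp (- (2 * pi * y * k) * norm v)"
        by (simp only: exp_add)
      moreover have "\<bar>sgn (Bf A c1 v) - sgn (Bf A c2 v)\<bar> \<le> 2"
        by (simp add: sgn_real_def)
      ultimately show ?thesis
        by (simp add: mult_mono mult.assoc)
    qed simp
  qed (use y k in simp)
qed

lemma rho_exp_decay:
  assumes sym: "transpose A = A" and ty: "type_r1_1 A" and dA: "det A \<noteq> 0"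
    and Q0: "Qf A c0 < 0" and c1: "c1 \<in> CQbar A c0" and c2: "c2 \<in> CQbar A c0"
    and y: "0 < Im \<tau>" and a1: "a \<in> Rset A c0 c1" and a2: "a \<in> Rset A c0 c2"
  shows "exp_decay_on (\<lambda>v. \<bar>rho A c0 c1 c2 v \<tau>\<bar> * exp (- 2 * pi * Im \<tau> * Qf A v))
    (range (\<lambda>n. int_vec n + a))"
proof (rule exp_decay_on_mono)
  let ?X = "\<lambda>v. exp (- 2 * pi * Im \<tau> * Qf A v)"
  let ?s1 = "\<lambda>v. sgn (Bf A c1 v)" and ?s2 = "\<lambda>v. sgn (Bf A c2 v)"
  show "exp_decay_on (\<lambda>v. \<bar>rho_c A c0 c1 v \<tau> - ?s1 v\<bar> * ?X v + \<bar>rho_c A c0 c2 v \<tau> - ?s2 v\<bar> * ?X v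
      + \<bar>?s1 v - ?s2 v\<bar> * ?X v) (range (\<lambda>n. int_vec n + a))"
    using sgn_mismatch_exp_decay[OF sym ty dA Q0 c1 c2 y
        CQbar_lattice_separated[OF c1 a1] CQbar_lattice_separated[OF c2 a2]]
    by (intro exp_decay_on_add rho_c_minus_sgn_exp_decay sym ty dA c1 c2 y)
  fix v
  have "\<bar>rho A c0 c1 c2 v \<tau>\<bar> \<le> \<bar>rho_c A c0 c1 v \<tau> - ?s1 v\<bar> + \<bar>rho_c A c0 c2 v \<tau> - ?s2 v\<bar> + \<bar>?s1 v - ?s2 v\<bar>"
    by (simp add: rho_def)
  then show "\<bar>rho A c0 c1 c2 v \<tau>\<bar> * ?X v \<le> \<bar>rho_c A c0 c1 v \<tau> - ?s1 v\<bar> * ?X v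
      + \<bar>rho_c A c0 c2 v \<tau> - ?s2 v\<bar> * ?X v + \<bar>?s1 v - ?s2 v\<bar> * ?X v"
    by (simp flip: distrib_right)
qed

lemma norm_theta_term:
  assumes sym: "transpose A = A" and y: "0 < Im \<tau>"
  shows "norm (theta_term A c0 c1 c2 z \<tau> n) =
    \<bar>rho A c0 c1 c2 (int_vec n + imquot z \<tau>) \<tau>\<bar> * exp (- 2 * pi * Im \<tau> * Qf A (int_vec n + imquot z \<tau>))
      * exp (2 * pi * Im \<tau> * Qf A (imquot z \<tau>))"
proof -
  define a where "a = imquot z \<tau>"
  have "(\<chi> j. Im (z$j)) = Im \<tau> *\<^sub>R a"
    using y by (simp add: a_def imquot_def vec_eq_iff)
  then have "Im (Bc A (\<chi> i. of_int (n$i)) z) = Im \<tau> * Bf A (int_vec n) a"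
    by (simp add: Bc_def Bf_expand int_vec_def Im_sum vec_eq_iff sum_distrib_left algebra_simps)
  then have "Re (2 * pi * \<i> * of_real (Qf A (int_vec n)) * \<tau> + 2 * pi * \<i> * Bc A (\<chi> i. of_int (n$i)) z)
      = - 2 * pi * Im \<tau> * (Qf A (int_vec n) + Bf A (int_vec n) a)"
    by (simp add: algebra_simps)
  also have "\<dots> = - 2 * pi * Im \<tau> * Qf A (int_vec n + a) + 2 * pi * Im \<tau> * Qf A a"
    using Qf_add[OF sym, of "int_vec n" a] by (simp add: algebra_simps)
  finally have Re_arg: "Re (2 * pi * \<i> * of_real (Qf A (int_vec n)) * \<tau> + 2 * pi * \<i> * Bc A (\<chi> i. of_int (n$i)) z)
      = - 2 * pi * Im \<tau> * Qf A (int_vec n + a) + 2 * pi * Im \<tau> * Qf A a" .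
  have "norm (theta_term A c0 c1 c2 z \<tau> n) = \<bar>rho A c0 c1 c2 (int_vec n + a) \<tau>\<bar>
      * exp (Re (2 * pi * \<i> * of_real (Qf A (int_vec n)) * \<tau> + 2 * pi * \<i> * Bc A (\<chi> i. of_int (n$i)) z))"
    by (simp only: theta_term_def norm_mult norm_exp_eq_Re norm_of_real a_def)
  then show ?thesis
    unfolding Re_arg exp_add by (simp add: a_def mult.assoc)
qed

theorem proposition2p4:
  fixes A :: "int^'n^'n" and c0 c1 c2 :: "real^'n" and z :: "complex^'n" and \<tau> :: complex
  assumes "transpose A = A"
    and "det A \<noteq> 0"
    and "type_r1_1 A"
    and "Qf A c0 < 0"
    and "c1 \<in> CQbar A c0" and "c2 \<in> CQbar A c0"
    and "(z, \<tau>) \<in> Dset A c0 c1 \<inter> Dset A c0 c2"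
  shows "(\<lambda>n. norm (theta_term A c0 c1 c2 z \<tau> n)) summable_on UNIV"
proof -
  have y: "0 < Im \<tau>" and a1: "imquot z \<tau> \<in> Rset A c0 c1" and a2: "imquot z \<tau> \<in> Rset A c0 c2"
    using assms(7) by (auto simp: Dset_def)
  have "(\<lambda>n. \<bar>rho A c0 c1 c2 (int_vec n + imquot z \<tau>) \<tau>\<bar>
      * exp (- 2 * pi * Im \<tau> * Qf A (int_vec n + imquot z \<tau>))) summable_on UNIV"
    using rho_exp_decay[OF assms(1,3,2,4-6) y a1 a2]
    by (rule summable_on_lattice_if_exp_decay_on) simp
  then show ?thesis
    unfolding norm_theta_term[OF assms(1) y] by (rule summable_on_cmult_left)
qed

end
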